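(* Let $A(x)=\sin^2(2\pi x)$, $\hat m(A)=\frac{A(1/3)+A(2/3)}{2}$, $\eta(x)=\frac{x}{4}+\frac12$, $F(x)=A(\frac{x}{2})+A(\frac{x}{4}+\frac12)$, and $V_2(x)=\lim_{n\to\infty}\sum_{i=0}^{n-1}[F(\eta^i(x))-2\hat m(A)]$ for $x\in[0,1]$. Then for each $N$, $V_2(x)=\sum_{i=0}^{N}\bigl(F(\eta^i(x))-2\hat m(A)\bigr)+\epsilon_N(x)$ where $$|\epsilon_N(x)|\le 2\pi\sum_{i=N}^{\infty}\frac{1}{4^i}=\frac{2\pi}{3\cdot4^{N-1}}\le\frac{2}{3\cdot 4^{N-2}}.$$
   Context: $\eta^i$ denotes the $i$-th iterate of $\eta$, with $\eta^0$ the identity. *)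

theory Defs
  imports Complex_Main
begin

definition A :: "real \<Rightarrow> real" where
  "A x = (sin (2 * pi * x))\<^sup>2"

definition m_hat :: real where
  "m_hat = (A (1/3) + A (2/3)) / 2"

definition eta :: "real \<Rightarrow> real" where
  "eta x = x / 4 + 1 / 2"

definition F :: "real \<Rightarrow> real" where
  "F x = A (x / 2) + A (x / 4 + 1 / 2)"

definition V2 :: "real \<Rightarrow> real" where
  "V2 x = lim (\<lambda>n. \<Sum>i<n. F ((eta ^^ i) x) - 2 * m_hat)"

end

theory Submission
  imports Defs
begin

text \<open>The map \<open>eta\<close> contracts by the factor \<open>1/4\<close> towards its fixed point \<open>2/3\<close>,
  and \<open>F (2/3) = A (1/3) + A (2/3) = 2 * m_hat\<close>. Since \<open>A\<close> is \<open>2\<pi>\<close>-Lipschitz,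
  \<open>F\<close> is \<open>3\<pi>/2\<close>-Lipschitz, so the \<open>i\<close>-th summand \<open>F (eta\<^sup>i x) - 2 * m_hat\<close> is at
  most \<open>3\<pi>/2 \<cdot> |x - 2/3| / 4\<^sup>i \<le> \<pi> / 4\<^sup>i\<close> for \<open>x \<in> [0,1]\<close>. The series therefore
  converges, and its tail after the index \<open>N\<close> is bounded by a geometric series.\<close>

lemma sin_squared_diff:
  fixes a b :: "'a::{real_normed_field,banach}"
  shows "(sin a)\<^sup>2 - (sin b)\<^sup>2 = sin (a + b) * sin (a - b)"
proof -
  have "sin (a + b) * sin (a - b) = (sin a * cos b)\<^sup>2 - (cos a * sin b)\<^sup>2"
    unfolding sin_add sin_diff power2_eq_square by (simp add: algebra_simps)
  also have "\<dots> = (sin a)\<^sup>2 * (1 - (sin b)\<^sup>2) - (1 - (sin a)\<^sup>2) * (sin b)\<^sup>2"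
    by (simp add: power_mult_distrib cos_squared_eq)
  finally show ?thesis by (simp add: algebra_simps)
qed

lemma A_lipschitz: "\<bar>A u - A v\<bar> \<le> 2 * pi * \<bar>u - v\<bar>"
proof -
  have "\<bar>A u - A v\<bar> = \<bar>sin (2*pi*u + 2*pi*v)\<bar> * \<bar>sin (2*pi*u - 2*pi*v)\<bar>"
    unfolding A_def sin_squared_diff by (simp add: abs_mult)
  also have "\<dots> \<le> 1 * \<bar>2*pi*u - 2*pi*v\<bar>"
    by (intro mult_mono abs_sin_x_le_abs_x) auto
  also have "\<bar>2*pi*u - 2*pi*v\<bar> = 2 * pi * \<bar>u - v\<bar>"
    by (simp add: right_diff_distrib[symmetric] abs_mult)
  finally show ?thesis by simp
qed

lemma F_lipschitz: "\<bar>F u - F v\<bar> \<le> 3 * pi / 2 * \<bar>u - v\<bar>"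
proof -
  have half: "\<bar>u/2 - v/2\<bar> = \<bar>u - v\<bar> / 2"
    and quarter: "\<bar>(u/4 + 1/2) - (v/4 + 1/2)\<bar> = \<bar>u - v\<bar> / 4"
    by (simp_all add: abs_if field_simps)
  show ?thesis
    using A_lipschitz[of "u/2" "v/2"] A_lipschitz[of "u/4 + 1/2" "v/4 + 1/2"]
    unfolding F_def half quarter by linarith
qed

lemma eta_funpow: "(eta ^^ i) x = 2/3 + (x - 2/3) / 4 ^ i"
  by (induction i) (auto simp: eta_def field_simps)

lemma F_two_thirds: "F (2/3) = 2 * m_hat"
  unfolding F_def m_hat_def by simp

lemma abs_F_eta_funpow_le:
  assumes "x \<in> {0..1}"
  shows "\<bar>F ((eta ^^ i) x) - 2 * m_hat\<bar> \<le> pi / 4 ^ i"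
proof -
  have "\<bar>F ((eta ^^ i) x) - 2 * m_hat\<bar> = \<bar>F ((eta ^^ i) x) - F (2/3)\<bar>"
    by (simp add: F_two_thirds)
  also have "\<dots> \<le> 3 * pi / 2 * \<bar>(eta ^^ i) x - 2/3\<bar>"
    by (rule F_lipschitz)
  also have "\<bar>(eta ^^ i) x - 2/3\<bar> = \<bar>x - 2/3\<bar> / 4 ^ i"
    by (simp add: eta_funpow)
  also have "3 * pi / 2 * (\<bar>x - 2/3\<bar> / 4 ^ i) \<le> 3 * pi / 2 * ((2/3) / 4 ^ i)"
    using assms by (intro mult_left_mono divide_right_mono abs_leI) auto
  finally show ?thesis by simp
qed

lemma sums_inverse_power_shift:
  fixes q :: real
  assumes "q > 1"
  shows "(\<lambda>i. 1 / q ^ (i + N)) sums (q / ((q - 1) * q ^ N))"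
proof -
  have "(\<lambda>i. (1 / q) ^ i) sums (q / (q - 1))"
    using geometric_sums[of "1 / q"] assms by (simp add: field_simps)
  from sums_divide[OF this, of "q ^ N"] show ?thesis
    by (simp add: power_add power_divide)
qed

lemma abs_suminf_remainder_le:
  fixes a b :: "nat \<Rightarrow> real"
  assumes "summable b" and "\<And>i. \<bar>a i\<bar> \<le> b i"
  shows "\<bar>suminf a - (\<Sum>i<n. a i)\<bar> \<le> (\<Sum>i. b (i + n))"
proof -
  have abs_summable: "summable (\<lambda>i. \<bar>a i\<bar>)"
    using assms by (intro summable_rabs_comparison_test[of _ b]) auto
  then have "summable a"
    by (rule summable_rabs_cancel)
  then have "\<bar>suminf a - (\<Sum>i<n. a i)\<bar> = \<bar>\<Sum>i. a (i + n)\<bar>"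
    by (simp add: suminf_minus_initial_segment)
  also have "\<dots> \<le> (\<Sum>i. \<bar>a (i + n)\<bar>)"
    using summable_ignore_initial_segment[OF abs_summable] by (rule summable_rabs)
  also have "\<dots> \<le> (\<Sum>i. b (i + n))"
    using summable_ignore_initial_segment[OF abs_summable, of n]
      summable_ignore_initial_segment[OF assms(1), of n] assms(2)
    by (intro suminf_le) auto
  finally show ?thesis .
qed

lemma summable_F_eta_funpow:
  assumes "x \<in> {0..1}"
  shows "summable (\<lambda>i. F ((eta ^^ i) x) - 2 * m_hat)"
proof (rule summable_comparison_test)
  show "summable (\<lambda>i. pi / 4 ^ i)"
    using summable_mult[OF summable_geometric[of "1/4::real"], of pi] by (simp add: power_divide)
qed (use abs_F_eta_funpow_le[OF assms] in auto)

lemma abs_V2_remainder_le: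
  assumes "x \<in> {0..1}"
  shows "\<bar>V2 x - (\<Sum>i\<le>N. F ((eta ^^ i) x) - 2 * m_hat)\<bar> \<le> pi / (3 * 4 ^ N)"
proof -
  have majorant_sums: "(\<lambda>i. pi / 4 ^ (i + n)) sums (pi * (4 / (3 * 4 ^ n)))" for n
    using sums_mult[OF sums_inverse_power_shift[of 4 n], of pi] by simp
  have "\<bar>V2 x - (\<Sum>i<Suc N. F ((eta ^^ i) x) - 2 * m_hat)\<bar> \<le> (\<Sum>i. pi / 4 ^ (i + Suc N))"
    unfolding V2_def suminf_eq_lim[symmetric]
    using sums_summable[OF majorant_sums[of 0]] abs_F_eta_funpow_le[OF assms]
    by (intro abs_suminf_remainder_le) auto
  also have "\<dots> = pi / (3 * 4 ^ N)"
    using sums_unique[OF majorant_sums[of "Suc N"]] by simp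
  finally show ?thesis
    by (simp add: lessThan_Suc_atMost)
qed

theorem mainTheorem7:
  fixes N :: nat and x :: real
  assumes "x \<in> {0..1}"
  shows "convergent (\<lambda>n. \<Sum>i<n. F ((eta ^^ i) x) - 2 * m_hat)
    \<and> \<bar>V2 x - (\<Sum>i\<le>N. F ((eta ^^ i) x) - 2 * m_hat)\<bar>
        \<le> 2 * pi * (\<Sum>i. 1 / 4 ^ (i + N))
    \<and> 2 * pi * (\<Sum>i. 1 / (4::real) ^ (i + N)) = 2 * pi / (3 * 4 powr (real N - 1))
    \<and> 2 * pi / (3 * 4 powr (real N - 1)) \<le> 2 / (3 * 4 powr (real N - 2))"
proof -
  have geometric_tail: "(\<Sum>i. 1 / 4 ^ (i + N)) = 4 / (3 * 4 ^ N :: real)"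
    using sums_unique[OF sums_inverse_power_shift[of 4 N]] by simp
  have powr_minus_1: "(4::real) powr (real N - 1) = 4 ^ N / 4"
    and powr_minus_2: "(4::real) powr (real N - 2) = 4 ^ N / 16"
    by (simp_all add: powr_diff powr_realpow)
  have "convergent (\<lambda>n. \<Sum>i<n. F ((eta ^^ i) x) - 2 * m_hat)"
    using summable_F_eta_funpow[OF assms] by (simp add: summable_iff_convergent)
  moreover have "pi / (3 * 4 ^ N) \<le> 2 * pi * (\<Sum>i. 1 / 4 ^ (i + N))"
    unfolding geometric_tail using pi_gt_zero by (simp add: field_simps)
  moreover have "2 * pi * (\<Sum>i. 1 / 4 ^ (i + N)) = 2 * pi / (3 * 4 powr (real N - 1))"
    unfolding geometric_tail powr_minus_1 by (simp add: field_simps)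
  moreover have "2 * pi / (3 * 4 powr (real N - 1)) \<le> 2 / (3 * 4 powr (real N - 2))"
    unfolding powr_minus_1 powr_minus_2 using pi_less_4 by (simp add: field_simps)
  ultimately show ?thesis
    using abs_V2_remainder_le[OF assms, of N] by linarith
qed

end
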